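(* Let $A\in\mathcal A_n$ and $i<j$, $k<l$ in $[n]$. If $R_{ij}^{kl}\in E(A)$, then $\widetilde A+\widetilde R_{ij}^{kl}$ is the corner sum matrix of a (unique) ASM in $\mathcal A_n$; if $R_{ij}^{kl}\in E^*(A)$, then $\widetilde A-\widetilde R_{ij}^{kl}$ is the corner sum matrix of a (unique) ASM in $\mathcal A_n$. Moreover the operator $r_{ij}^{kl}$ is an involution: $r_{ij}^{kl}(r_{ij}^{kl}(A))=A$ for all $A\in\mathcal A_n$.
   Context: An $n\times n$ matrix $A=(a_{ij})$ is an alternating sign matrix (ASM) if all $a_{ij}\in\{-1,0,1\}$, all partial row sums $\sum_{k\le j}a_{ik}$ and partial column sums $\sum_{k\le i}a_{kj}$ lie in $\{0,1\}$, and every full row sum and column sum equals $1$; $\mathcal A_n$ is the set of $n\times n$ ASMs. The corner sum matrix is $\widetilde A(i,j)=\sum_{p\le i,q\le j}a_{pq}$, with $\widetilde A(i,j)=0$ if $i=0$ or $j=0$. For $i<j$, $k<l$ in $[n]$, $R_{ij}^{kl}=\{(p,q): i\le p<j,\ k\le q<l\}$ and $\widetilde R_{ij}^{kl}$ is the $n\times n$ $0/1$ matrix with $1$ exactly at positions in $R_{ij}^{kl}$. $E(A)$ is the set of essential rectangles of $A$: those $R_{ij}^{kl}$ such that for all $(p,q)\in R_{ij}^{kl}$: $\widetilde A(p,k)=\widetilde A(p,k-1)$, $\widetilde A(p,l)=\widetilde A(p,l-1)+1$, $\widetilde A(i,q)=\widetilde A(i-1,q)$, $\widetilde A(j,q)=\widetilde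 A(j-1,q)+1$. $E^*(A)$ is the set of dual essential rectangles: those $R_{ij}^{kl}$ such that for all $(p,q)\in R_{ij}^{kl}$: $\widetilde A(p,k)=\widetilde A(p,k-1)+1$, $\widetilde A(p,l)=\widetilde A(p,l-1)$, $\widetilde A(i,q)=\widetilde A(i-1,q)+1$, $\widetilde A(j,q)=\widetilde A(j-1,q)$. The rectangular operator $r_{ij}^{kl}:\mathcal A_n\to\mathcal A_n$ sends $A$ to the ASM whose corner sum matrix is $\widetilde A+\widetilde R_{ij}^{kl}$ if $R_{ij}^{kl}\in E(A)$, $\widetilde A-\widetilde R_{ij}^{kl}$ if $R_{ij}^{kl}\in E^*(A)$, and $\widetilde A$ otherwise. *)

theory Defs
  imports Main
begin

text \<open>An n x n matrix is a function nat => nat => int, indexed by [n] = {1..n};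
  entries outside [n] x [n] are required to be 0 so that a matrix is determined
  by its n x n block.\<close>

definition is_asm :: "nat \<Rightarrow> (nat \<Rightarrow> nat \<Rightarrow> int) \<Rightarrow> bool" where
  "is_asm n A \<longleftrightarrow>
     (\<forall>i j. (i \<notin> {1..n} \<or> j \<notin> {1..n}) \<longrightarrow> A i j = 0) \<and>
     (\<forall>i\<in>{1..n}. \<forall>j\<in>{1..n}. A i j \<in> {-1, 0, 1}) \<and>
     (\<forall>i\<in>{1..n}. \<forall>j\<in>{1..n}. (\<Sum>k\<in>{1..j}. A i k) \<in> {0, 1}) \<and>
     (\<forall>i\<in>{1..n}. \<forall>j\<in>{1..n}. (\<Sum>k\<in>{1..i}. A k j) \<in> {0, 1}) \<and>
     (\<forall>i\<in>{1..n}. (\<Sum>k\<in>{1..n}. A i k) = 1) \<and>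
     (\<forall>j\<in>{1..n}. (\<Sum>k\<in>{1..n}. A k j) = 1)"

text \<open>Corner sum matrix; it is 0 when i = 0 or j = 0 (empty sums).\<close>
definition corner :: "(nat \<Rightarrow> nat \<Rightarrow> int) \<Rightarrow> nat \<Rightarrow> nat \<Rightarrow> int" where
  "corner A i j = (\<Sum>p\<in>{1..i}. \<Sum>q\<in>{1..j}. A p q)"

definition in_rect :: "nat \<Rightarrow> nat \<Rightarrow> nat \<Rightarrow> nat \<Rightarrow> nat \<Rightarrow> nat \<Rightarrow> bool" where
  "in_rect i j k l p q \<longleftrightarrow> i \<le> p \<and> p < j \<and> k \<le> q \<and> q < l"

definition rect_mat :: "nat \<Rightarrow> nat \<Rightarrow> nat \<Rightarrow> nat \<Rightarrow> nat \<Rightarrow> nat \<Rightarrow> int" where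
  "rect_mat i j k l p q = (if in_rect i j k l p q then 1 else 0)"

definition essential :: "(nat \<Rightarrow> nat \<Rightarrow> int) \<Rightarrow> nat \<Rightarrow> nat \<Rightarrow> nat \<Rightarrow> nat \<Rightarrow> bool" where
  "essential A i j k l \<longleftrightarrow>
     (\<forall>p q. in_rect i j k l p q \<longrightarrow>
        corner A p k = corner A p (k - 1) \<and>
        corner A p l = corner A p (l - 1) + 1 \<and>
        corner A i q = corner A (i - 1) q \<and>
        corner A j q = corner A (j - 1) q + 1)"

definition dual_essential :: "(nat \<Rightarrow> nat \<Rightarrow> int) \<Rightarrow> nat \<Rightarrow> nat \<Rightarrow> nat \<Rightarrow> nat \<Rightarrow> bool" where
  "dual_essential A i j k l \<longleftrightarrow>
     (\<forall>p q. in_rect i j k l p q \<longrightarrow>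
        corner A p k = corner A p (k - 1) + 1 \<and>
        corner A p l = corner A p (l - 1) \<and>
        corner A i q = corner A (i - 1) q + 1 \<and>
        corner A j q = corner A (j - 1) q)"

definition shifted_asm ::
  "nat \<Rightarrow> (nat \<Rightarrow> nat \<Rightarrow> int) \<Rightarrow> int \<Rightarrow> nat \<Rightarrow> nat \<Rightarrow> nat \<Rightarrow> nat \<Rightarrow> (nat \<Rightarrow> nat \<Rightarrow> int) \<Rightarrow> bool" where
  "shifted_asm n A s i j k l B \<longleftrightarrow> is_asm n B \<and>
     (\<forall>p\<in>{1..n}. \<forall>q\<in>{1..n}. corner B p q = corner A p q + s * rect_mat i j k l p q)"

definition rect_op :: "nat \<Rightarrow> nat \<Rightarrow> nat \<Rightarrow> nat \<Rightarrow> nat \<Rightarrow> (nat \<Rightarrow> nat \<Rightarrow> int) \<Rightarrow> (nat \<Rightarrow> nat \<Rightarrow> int)" where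
  "rect_op n i j k l A =
     (if essential A i j k l then (THE B. shifted_asm n A 1 i j k l B)
      else if dual_essential A i j k l then (THE B. shifted_asm n A (-1) i j k l B)
      else A)"

end

theory Submission
  imports Defs
begin

text \<open>An integer matrix F on {0..n} x {0..n} vanishing on the zeroth row and column is the corner
  sum matrix of an ASM exactly when all its row and column steps lie in {0,1} and the steps into
  the last row and column are all 1. Adding s R_{ij}^{kl} (s = \<plusminus>1) changes steps only across the
  four edges of the rectangle, by \<plusminus>s; the (dual) essential conditions say precisely that these steps
  are 0 on one pair of edges and 1 on the other, so they stay in {0,1}. After the shift the two
  pairs of edges swap their values, so the rectangle becomes dual essential (resp. essential) for
  the new ASM, and the reverse shift returns A. Uniqueness holds because an ASM is recovered from
  its corner sum matrix by second differences.\<close>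

definition is_corner_sum_matrix :: "nat \<Rightarrow> (nat \<Rightarrow> nat \<Rightarrow> int) \<Rightarrow> bool" where
  "is_corner_sum_matrix n F \<longleftrightarrow> (\<forall>q. F 0 q = 0) \<and> (\<forall>p. F p 0 = 0) \<and>
    (\<forall>p\<in>{1..n}. \<forall>q\<in>{1..n}. F p q - F (p-1) q \<in> {0,1} \<and> F p q - F p (q-1) \<in> {0,1}) \<and>
    (\<forall>p\<in>{1..n}. F p n - F (p-1) n = 1) \<and> (\<forall>q\<in>{1..n}. F n q - F n (q-1) = 1)"

lemma sum_diff_pred_telescope: "(\<Sum>x\<in>{1..m::nat}. f x - f (x - 1)) = f m - (f 0 :: int)"
  by (induction m) (auto simp: sum.cl_ivl_Suc)

lemma corner_zero [simp]: "corner A 0 q = 0" "corner A p 0 = 0"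
  by (auto simp: corner_def)

lemma corner_row_step: "1 \<le> p \<Longrightarrow> corner A p q - corner A (p-1) q = (\<Sum>k\<in>{1..q}. A p k)"
  by (cases p) (simp_all add: corner_def sum.cl_ivl_Suc)

lemma corner_col_step: "1 \<le> q \<Longrightarrow> corner A p q - corner A p (q-1) = (\<Sum>k\<in>{1..p}. A k q)"
  by (cases q) (simp_all add: corner_def sum.cl_ivl_Suc sum.distrib)

lemma entry_eq_corner_second_difference:
  assumes "1 \<le> p" "1 \<le> q"
  shows "A p q = corner A p q - corner A (p-1) q - corner A p (q-1) + corner A (p-1) (q-1)"
  using assms corner_row_step[of p A q] corner_row_step[of p A "q-1"]
  by (cases q) (auto simp: sum.cl_ivl_Suc)

lemma is_corner_sum_matrix_corner:
  assumes "is_asm n A"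
  shows "is_corner_sum_matrix n (corner A)"
  using assms corner_row_step[of _ A] corner_col_step[of _ A]
  unfolding is_corner_sum_matrix_def is_asm_def by auto

lemma is_asm_of_corner_sum_matrix:
  assumes F: "is_corner_sum_matrix n F"
  obtains B where "is_asm n B" "\<And>p q. p \<le> n \<Longrightarrow> q \<le> n \<Longrightarrow> corner B p q = F p q"
proof -
  define B where "B p q = (if p \<in> {1..n} \<and> q \<in> {1..n}
    then F p q - F (p-1) q - F p (q-1) + F (p-1) (q-1) else 0)" for p q
  have F0: "F 0 q = 0" "F p 0 = 0" for p q
    using F by (auto simp: is_corner_sum_matrix_def)
  have steps: "F p q - F (p-1) q \<in> {0,1}" "F p q - F p (q-1) \<in> {0,1}"
    if "p \<in> {1..n}" "q \<in> {1..n}" for p q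
    using F that by (auto simp: is_corner_sum_matrix_def)
  have last_steps: "\<forall>p\<in>{1..n}. F p n - F (p-1) n = 1" "\<forall>q\<in>{1..n}. F n q - F n (q-1) = 1"
    using F by (auto simp: is_corner_sum_matrix_def)
  have row_sum: "(\<Sum>k\<in>{1..q}. B p k) = F p q - F (p-1) q" if "p \<in> {1..n}" "q \<le> n" for p q
  proof -
    have "(\<Sum>k\<in>{1..q}. B p k) = (\<Sum>k\<in>{1..q}. (\<lambda>k. F p k - F (p-1) k) k - (\<lambda>k. F p k - F (p-1) k) (k-1))"
      using that by (intro sum.cong) (auto simp: B_def)
    also have "\<dots> = F p q - F (p-1) q"
      by (subst sum_diff_pred_telescope) (simp add: F0)
    finally show ?thesis .
  qed
  have col_sum: "(\<Sum>k\<in>{1..p}. B k q) = F p q - F p (q-1)" if "q \<in> {1..n}" "p \<le> n" for p q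
  proof -
    have "(\<Sum>k\<in>{1..p}. B k q) = (\<Sum>k\<in>{1..p}. (\<lambda>k. F k q - F k (q-1)) k - (\<lambda>k. F k q - F k (q-1)) (k-1))"
      using that by (intro sum.cong) (auto simp: B_def)
    also have "\<dots> = F p q - F p (q-1)"
      by (subst sum_diff_pred_telescope) (simp add: F0)
    finally show ?thesis .
  qed
  have entry: "B p q \<in> {-1,0,1}" if "p \<in> {1..n}" "q \<in> {1..n}" for p q
  proof (cases "q = 1")
    case True
    then show ?thesis using steps[OF that] that by (auto simp: B_def F0)
  next
    case False
    then have "q - 1 \<in> {1..n}" using that by auto
    then show ?thesis using steps[OF that] steps[OF that(1) \<open>q - 1 \<in> {1..n}\<close>] that
      by (auto simp: B_def)
  qed
  have "is_asm n B"
    unfolding is_asm_def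
  proof (intro conjI ballI allI impI)
    fix p q :: nat
    assume "p \<notin> {1..n} \<or> q \<notin> {1..n}"
    then show "B p q = 0" by (auto simp: B_def)
  next
    fix p q
    assume pq: "p \<in> {1..n}" "q \<in> {1..n}"
    show "B p q \<in> {-1,0,1}" using entry[OF pq] .
    show "(\<Sum>k\<in>{1..q}. B p k) \<in> {0,1}" using row_sum[of p q] steps[OF pq] pq by auto
    show "(\<Sum>k\<in>{1..p}. B k q) \<in> {0,1}" using col_sum[of q p] steps[OF pq] pq by auto
  next
    fix p
    assume "p \<in> {1..n}"
    then show "(\<Sum>k\<in>{1..n}. B p k) = 1" using row_sum[of p n] last_steps by auto
  next
    fix q
    assume "q \<in> {1..n}"
    then show "(\<Sum>k\<in>{1..n}. B k q) = 1" using col_sum[of q n] last_steps by auto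
  qed
  moreover have "corner B p q = F p q" if "p \<le> n" "q \<le> n" for p q
  proof -
    have "corner B p q = (\<Sum>p'\<in>{1..p}. (\<lambda>p'. F p' q) p' - (\<lambda>p'. F p' q) (p'-1))"
      unfolding corner_def using that row_sum by (intro sum.cong refl) (metis atLeastAtMost_iff le_trans)
    also have "\<dots> = F p q"
      by (subst sum_diff_pred_telescope) (simp add: F0)
    finally show ?thesis .
  qed
  ultimately show ?thesis by (rule that)
qed

lemma asm_eqI_corner:
  assumes "is_asm n B1" "is_asm n B2"
    and eq: "\<forall>p\<in>{1..n}. \<forall>q\<in>{1..n}. corner B1 p q = corner B2 p q"
  shows "B1 = B2"
proof (intro ext)
  fix p q
  have eq': "corner B1 p' q' = corner B2 p' q'" if "p' \<le> n" "q' \<le> n" for p' q'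
    using eq that by (cases "p' = 0"; cases "q' = 0") auto
  show "B1 p q = B2 p q"
  proof (cases "p \<in> {1..n} \<and> q \<in> {1..n}")
    case True
    then show ?thesis
      using entry_eq_corner_second_difference[of p q B1] entry_eq_corner_second_difference[of p q B2]
        eq'[of p q] eq'[of "p-1" q] eq'[of p "q-1"] eq'[of "p-1" "q-1"]
      by auto
  next
    case False
    then show ?thesis using assms(1,2) unfolding is_asm_def by auto
  qed
qed

text \<open>The steps of F across the four edges of R_{ij}^{kl}. The values (1 - s) div 2 and
  (1 + s) div 2 are 0 and 1 for s = 1 (the essential condition) and 1 and 0 for s = -1 (the dual
  essential one).\<close>

definition rect_edges :: "nat \<Rightarrow> nat \<Rightarrow> nat \<Rightarrow> nat \<Rightarrow> (nat \<Rightarrow> nat \<Rightarrow> int) \<Rightarrow> int \<Rightarrow> bool" where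
  "rect_edges i j k l F s \<longleftrightarrow>
     (\<forall>p. i \<le> p \<and> p < j \<longrightarrow> F p k - F p (k-1) = (1 - s) div 2 \<and> F p l - F p (l-1) = (1 + s) div 2) \<and>
     (\<forall>q. k \<le> q \<and> q < l \<longrightarrow> F i q - F (i-1) q = (1 - s) div 2 \<and> F j q - F (j-1) q = (1 + s) div 2)"

lemma essential_iff_rect_edges:
  assumes "i < j" "k < l"
  shows "essential A i j k l \<longleftrightarrow> rect_edges i j k l (corner A) 1"
proof
  assume E: "essential A i j k l"
  have "in_rect i j k l p k" "in_rect i j k l i q"
    if "i \<le> p" "p < j" "k \<le> q" "q < l" for p q
    using assms that by (auto simp: in_rect_def)
  then show "rect_edges i j k l (corner A) 1"
    using E assms unfolding essential_def rect_edges_def by fastforce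
qed (auto simp: essential_def rect_edges_def in_rect_def)

lemma dual_essential_iff_rect_edges:
  assumes "i < j" "k < l"
  shows "dual_essential A i j k l \<longleftrightarrow> rect_edges i j k l (corner A) (-1)"
proof
  assume E: "dual_essential A i j k l"
  have "in_rect i j k l p k" "in_rect i j k l i q"
    if "i \<le> p" "p < j" "k \<le> q" "q < l" for p q
    using assms that by (auto simp: in_rect_def)
  then show "rect_edges i j k l (corner A) (-1)"
    using E assms unfolding dual_essential_def rect_edges_def by fastforce
qed (auto simp: dual_essential_def rect_edges_def in_rect_def)

lemma rect_edges_sign_unique:
  assumes "i < j" "k < l" "rect_edges i j k l F 1"
  shows "\<not> rect_edges i j k l F (-1)"
  using assms unfolding rect_edges_def by auto

lemma shifted_asm_swap:
  assumes "shifted_asm n A s i j k l B" "is_asm n A"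
  shows "shifted_asm n B (-s) i j k l A"
  using assms by (auto simp: shifted_asm_def)

context
  fixes n i j k l :: nat
  assumes rect_bounds: "1 \<le> i" "i < j" "j \<le> n" "1 \<le> k" "k < l" "l \<le> n"
begin

lemma is_corner_sum_matrix_shift:
  assumes F: "is_corner_sum_matrix n F" and s: "s \<in> {1, -1}" and edges: "rect_edges i j k l F s"
  shows "is_corner_sum_matrix n (\<lambda>p q. F p q + s * rect_mat i j k l p q)"
    (is "is_corner_sum_matrix n ?G")
proof -
  have steps: "F p q - F (p-1) q \<in> {0,1}" "F p q - F p (q-1) \<in> {0,1}"
    if "p \<in> {1..n}" "q \<in> {1..n}" for p q
    using F that by (auto simp: is_corner_sum_matrix_def)
  have shifted_steps: "(1 - s) div 2 + s \<in> {0,1}" "(1 + s) div 2 - s \<in> {0,1}"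
    using s by auto
  have G_diff: "?G p q - ?G p' q' = (F p q - F p' q') + s * (rect_mat i j k l p q - rect_mat i j k l p' q')"
    for p q p' q'
    by (simp add: algebra_simps)
  have row_step: "?G p q - ?G (p-1) q \<in> {0,1}" if pq: "p \<in> {1..n}" "q \<in> {1..n}" for p q
  proof -
    consider "k \<le> q" "q < l" "p = i" | "k \<le> q" "q < l" "p = j"
      | "\<not> (k \<le> q \<and> q < l \<and> (p = i \<or> p = j))"
      by blast
    then show ?thesis
    proof cases
      case 1
      then have "F p q - F (p-1) q = (1 - s) div 2"
        using edges by (simp add: rect_edges_def)
      moreover have "rect_mat i j k l p q - rect_mat i j k l (p-1) q = 1"
        using 1 pq rect_bounds by (auto simp: rect_mat_def in_rect_def)
      ultimately show ?thesis
        by (simp only: G_diff) (use shifted_steps(1) in simp)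
    next
      case 2
      then have "F p q - F (p-1) q = (1 + s) div 2"
        using edges by (simp add: rect_edges_def)
      moreover have "rect_mat i j k l p q - rect_mat i j k l (p-1) q = -1"
        using 2 pq rect_bounds by (auto simp: rect_mat_def in_rect_def)
      ultimately show ?thesis
        by (simp only: G_diff) (use shifted_steps(2) in simp)
    next
      case 3
      then have "rect_mat i j k l p q - rect_mat i j k l (p-1) q = 0"
        using pq rect_bounds by (auto simp: rect_mat_def in_rect_def)
      then show ?thesis
        by (simp only: G_diff) (use steps[OF pq] in simp)
    qed
  qed
  have col_step: "?G p q - ?G p (q-1) \<in> {0,1}" if pq: "p \<in> {1..n}" "q \<in> {1..n}" for p q
  proof -
    consider "i \<le> p" "p < j" "q = k" | "i \<le> p" "p < j" "q = l"
      | "\<not> (i \<le> p \<and> p < j \<and> (q = k \<or> q = l))"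
      by blast
    then show ?thesis
    proof cases
      case 1
      then have "F p q - F p (q-1) = (1 - s) div 2"
        using edges by (simp add: rect_edges_def)
      moreover have "rect_mat i j k l p q - rect_mat i j k l p (q-1) = 1"
        using 1 pq rect_bounds by (auto simp: rect_mat_def in_rect_def)
      ultimately show ?thesis
        by (simp only: G_diff) (use shifted_steps(1) in simp)
    next
      case 2
      then have "F p q - F p (q-1) = (1 + s) div 2"
        using edges by (simp add: rect_edges_def)
      moreover have "rect_mat i j k l p q - rect_mat i j k l p (q-1) = -1"
        using 2 pq rect_bounds by (auto simp: rect_mat_def in_rect_def)
      ultimately show ?thesis
        by (simp only: G_diff) (use shifted_steps(2) in simp)
    next
      case 3
      then have "rect_mat i j k l p q - rect_mat i j k l p (q-1) = 0"
        using pq rect_bounds by (auto simp: rect_mat_def in_rect_def)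
      then show ?thesis
        by (simp only: G_diff) (use steps[OF pq] in simp)
    qed
  qed
  have outside: "rect_mat i j k l 0 q = 0" "rect_mat i j k l p 0 = 0"
    "rect_mat i j k l n q = 0" "rect_mat i j k l p n = 0" for p q
    using rect_bounds by (auto simp: rect_mat_def in_rect_def)
  show ?thesis
    using F row_step col_step outside unfolding is_corner_sum_matrix_def by auto
qed

lemma corner_shifted_asm:
  assumes "shifted_asm n A s i j k l B" "p \<le> n" "q \<le> n"
  shows "corner B p q = corner A p q + s * rect_mat i j k l p q"
  using assms rect_bounds
  by (cases "p = 0"; cases "q = 0") (auto simp: shifted_asm_def rect_mat_def in_rect_def)

lemma shifted_asm_ex1:
  assumes A: "is_asm n A" and s: "s \<in> {1, -1}" and edges: "rect_edges i j k l (corner A) s"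
  shows "\<exists>!B. shifted_asm n A s i j k l B"
proof -
  obtain B where B: "is_asm n B"
    "\<And>p q. p \<le> n \<Longrightarrow> q \<le> n \<Longrightarrow> corner B p q = corner A p q + s * rect_mat i j k l p q"
    using is_asm_of_corner_sum_matrix[OF is_corner_sum_matrix_shift[OF is_corner_sum_matrix_corner[OF A] s edges]]
    by blast
  then have "shifted_asm n A s i j k l B"
    by (simp add: shifted_asm_def)
  moreover have "B' = B" if "shifted_asm n A s i j k l B'" for B'
    using that B by (intro asm_eqI_corner[of n]) (auto simp: shifted_asm_def)
  ultimately show ?thesis by blast
qed

lemma rect_edges_shifted_asm:
  assumes B: "shifted_asm n A s i j k l B" and s: "s \<in> {1, -1}"
    and edges: "rect_edges i j k l (corner A) s"
  shows "rect_edges i j k l (corner B) (-s)"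
proof -
  have flipped: "(1 - s) div 2 + s = (1 - - s) div 2" "(1 + s) div 2 - s = (1 + - s) div 2"
    using s by auto
  show ?thesis
    unfolding rect_edges_def
  proof (intro conjI allI impI)
    fix p
    assume p: "i \<le> p \<and> p < j"
    have "corner B p (k-1) = corner A p (k-1)" "corner B p k = corner A p k + s"
      "corner B p (l-1) = corner A p (l-1) + s" "corner B p l = corner A p l"
      using corner_shifted_asm[OF B, of p] p rect_bounds by (auto simp: rect_mat_def in_rect_def)
    moreover have "corner A p k - corner A p (k-1) = (1 - s) div 2"
      "corner A p l - corner A p (l-1) = (1 + s) div 2"
      using edges p by (simp_all add: rect_edges_def)
    ultimately show "corner B p k - corner B p (k-1) = (1 - - s) div 2"
      "corner B p l - corner B p (l-1) = (1 + - s) div 2"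
      using flipped by linarith+
  next
    fix q
    assume q: "k \<le> q \<and> q < l"
    have "corner B (i-1) q = corner A (i-1) q" "corner B i q = corner A i q + s"
      "corner B (j-1) q = corner A (j-1) q + s" "corner B j q = corner A j q"
      using corner_shifted_asm[OF B, of _ q] q rect_bounds by (auto simp: rect_mat_def in_rect_def)
    moreover have "corner A i q - corner A (i-1) q = (1 - s) div 2"
      "corner A j q - corner A (j-1) q = (1 + s) div 2"
      using edges q by (simp_all add: rect_edges_def)
    ultimately show "corner B i q - corner B (i-1) q = (1 - - s) div 2"
      "corner B j q - corner B (j-1) q = (1 + - s) div 2"
      using flipped by linarith+
  qed
qed

lemma rect_op_shifted_asm:
  assumes A: "is_asm n A" and s: "s \<in> {1, -1}" and edges: "rect_edges i j k l (corner A) s"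
  shows "shifted_asm n A s i j k l (rect_op n i j k l A)"
proof -
  have "rect_op n i j k l A = (THE B. shifted_asm n A s i j k l B)"
  proof (cases "s = 1")
    case True
    then show ?thesis
      using edges essential_iff_rect_edges rect_bounds by (simp add: rect_op_def)
  next
    case False
    with s have "s = -1" by simp
    then have "dual_essential A i j k l" "\<not> essential A i j k l"
      using edges rect_edges_sign_unique essential_iff_rect_edges dual_essential_iff_rect_edges
        rect_bounds by auto
    then show ?thesis
      using \<open>s = -1\<close> by (simp add: rect_op_def)
  qed
  then show ?thesis
    using theI'[OF shifted_asm_ex1[OF assms]] by simp
qed

lemma rect_op_involution:
  assumes A: "is_asm n A"
  shows "rect_op n i j k l (rect_op n i j k l A) = A"
proof (cases "\<exists>s\<in>{1, -1}. rect_edges i j k l (corner A) s")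
  case True
  then obtain s where s: "s \<in> {1, -1}" and edges: "rect_edges i j k l (corner A) s"
    by blast
  define B where "B = rect_op n i j k l A"
  have AB: "shifted_asm n A s i j k l B"
    unfolding B_def using rect_op_shifted_asm[OF A s edges] .
  have B: "is_asm n B" "- s \<in> {1, -1}" "rect_edges i j k l (corner B) (- s)"
    using AB s rect_edges_shifted_asm[OF AB s edges] by (auto simp: shifted_asm_def)
  have "shifted_asm n B (-s) i j k l (rect_op n i j k l B)"
    using rect_op_shifted_asm[OF B] .
  moreover have "shifted_asm n B (-s) i j k l A"
    using shifted_asm_swap[OF AB A] .
  ultimately show ?thesis
    using shifted_asm_ex1[OF B] unfolding B_def by blast
next
  case False
  then have "\<not> essential A i j k l" "\<not> dual_essential A i j k l"
    using essential_iff_rect_edges dual_essential_iff_rect_edges rect_bounds by auto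
  then show ?thesis
    by (simp add: rect_op_def)
qed

end

theorem mainTheorem2:
  fixes n i j k l :: nat
  assumes "i \<in> {1..n}" "j \<in> {1..n}" "k \<in> {1..n}" "l \<in> {1..n}" "i < j" "k < l"
  shows "(\<forall>A. is_asm n A \<and> essential A i j k l \<longrightarrow> (\<exists>!B. shifted_asm n A 1 i j k l B))
       \<and> (\<forall>A. is_asm n A \<and> dual_essential A i j k l \<longrightarrow> (\<exists>!B. shifted_asm n A (-1) i j k l B))
       \<and> (\<forall>A. is_asm n A \<longrightarrow> rect_op n i j k l (rect_op n i j k l A) = A)"
proof -
  have bounds: "1 \<le> i" "i < j" "j \<le> n" "1 \<le> k" "k < l" "l \<le> n"
    using assms by auto
  show ?thesis
  proof (intro conjI allI impI)
    fix A
    assume "is_asm n A \<and> essential A i j k l"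
    then show "\<exists>!B. shifted_asm n A 1 i j k l B"
      using shifted_asm_ex1[OF bounds, of A 1] essential_iff_rect_edges[OF bounds(2,5)] by simp
  next
    fix A
    assume "is_asm n A \<and> dual_essential A i j k l"
    then show "\<exists>!B. shifted_asm n A (-1) i j k l B"
      using shifted_asm_ex1[OF bounds, of A "-1"] dual_essential_iff_rect_edges[OF bounds(2,5)] by simp
  next
    fix A
    assume "is_asm n A"
    then show "rect_op n i j k l (rect_op n i j k l A) = A"
      by (rule rect_op_involution[OF bounds])
  qed
qed

end
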